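(* Let $(A,E)$ be the direct producted noncommutative probability space over $D_N$ of noncommutative probability spaces $(A_1,\varphi_1),\dots,(A_N,\varphi_N)$. Let $i\neq j$ in $\{1,\dots,N\}$, $a_i\in A_i$, $a_j\in A_j$, and let $e_i\in A$ be the tuple with $a_i$ in the $i$-th coordinate and $0$ elsewhere, and $e_j\in A$ the tuple with $a_j$ in the $j$-th coordinate and $0$ elsewhere. Then $e_i$ and $e_j$ are free over $D_N$ in $(A,E)$.
   Context: Each $(A_j,\varphi_j)$ is a unital complex algebra with a linear functional. $A=\times_{j=1}^N A_j$ with componentwise operations; $D_N=\mathbb{C}^N$ with componentwise operations, identified with the central subalgebra $\{(\alpha_1 1,\dots,\alpha_N 1)\}$ of $A$; $E((a_1,\dots,a_N))=(\varphi_1(a_1),\dots,\varphi_N(a_N))$. $D_N$-valued cumulants: $k_n(y_1,\dots,y_n)=\sum_{\pi\in NC(n)}\prod_{V\in\pi}E(\prod_{l\in V}y_l)\,\mu(\pi,1_n)$. Elements are free over $D_N$ if all mixed $D_N$-valued cumulants of elements of the algebras they generate together with $D_N$ vanish. *)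

theory Defs
  imports Complex_Main
begin

class cplx_algebra_1 = ring_1 +
  fixes scaleC :: "complex \<Rightarrow> 'a \<Rightarrow> 'a"
  assumes scaleC_add_right: "scaleC c (x + y) = scaleC c x + scaleC c y"
    and scaleC_add_left: "scaleC (c + d) x = scaleC c x + scaleC d x"
    and scaleC_scaleC: "scaleC c (scaleC d x) = scaleC (c * d) x"
    and scaleC_one: "scaleC 1 x = x"
    and mult_scaleC_left: "scaleC c x * y = scaleC c (x * y)"
    and mult_scaleC_right: "x * scaleC c y = scaleC c (x * y)"

text \<open>The algebras A_j are modelled as unital subalgebras (carriers) of a common
  ambient unital complex algebra; (A_j, phi_j) is a noncommutative probability space.\<close>
definition ncps :: "'a::cplx_algebra_1 set \<Rightarrow> ('a \<Rightarrow> complex) \<Rightarrow> bool" where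
  "ncps A \<phi> \<longleftrightarrow>
     1 \<in> A \<and>
     (\<forall>x\<in>A. \<forall>y\<in>A. x + y \<in> A \<and> x * y \<in> A) \<and>
     (\<forall>c. \<forall>x\<in>A. scaleC c x \<in> A) \<and>
     (\<forall>x\<in>A. \<forall>y\<in>A. \<phi> (x + y) = \<phi> x + \<phi> y) \<and>
     (\<forall>c. \<forall>x\<in>A. \<phi> (scaleC c x) = c * \<phi> x) \<and>
     \<phi> 1 = 1"

text \<open>Elements of A = A_0 x ... x A_(N-1) are functions nat => 'a (coordinates
  j < N, zero for j >= N); elements of D_N = C^N are functions nat => complex
  (zero for j >= N).\<close>

definition prodA :: "nat \<Rightarrow> (nat \<Rightarrow> 'a::cplx_algebra_1 set) \<Rightarrow> (nat \<Rightarrow> 'a) set" where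
  "prodA N A = {x. (\<forall>j<N. x j \<in> A j) \<and> (\<forall>j. N \<le> j \<longrightarrow> x j = 0)}"

definition dn :: "nat \<Rightarrow> (nat \<Rightarrow> complex) \<Rightarrow> nat \<Rightarrow> 'a::cplx_algebra_1" where
  "dn N \<alpha> = (\<lambda>m. if m < N then scaleC (\<alpha> m) 1 else 0)"

definition condE :: "nat \<Rightarrow> (nat \<Rightarrow> 'a::cplx_algebra_1 \<Rightarrow> complex) \<Rightarrow> (nat \<Rightarrow> 'a) \<Rightarrow> nat \<Rightarrow> complex" where
  "condE N \<phi> x = (\<lambda>m. if m < N then \<phi> m (x m) else 0)"

definition single :: "nat \<Rightarrow> 'a::cplx_algebra_1 \<Rightarrow> nat \<Rightarrow> 'a" where
  "single i a = (\<lambda>m. if m = i then a else 0)"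

definition is_partition :: "nat set set \<Rightarrow> nat set \<Rightarrow> bool" where
  "is_partition P S \<longleftrightarrow>
     (\<forall>V\<in>P. V \<noteq> {} \<and> V \<subseteq> S) \<and> (\<forall>V\<in>P. \<forall>W\<in>P. V \<noteq> W \<longrightarrow> V \<inter> W = {}) \<and> \<Union>P = S"

definition noncrossing :: "nat set set \<Rightarrow> bool" where
  "noncrossing P \<longleftrightarrow>
     (\<forall>V\<in>P. \<forall>W\<in>P. V \<noteq> W \<longrightarrow>
        \<not> (\<exists>a b c d. a < b \<and> b < c \<and> c < d \<and> a \<in> V \<and> c \<in> V \<and> b \<in> W \<and> d \<in> W))"

definition NC :: "nat \<Rightarrow> nat set set set" where
  "NC n = {P. is_partition P {0..<n} \<and> noncrossing P}"

definition refines :: "nat set set \<Rightarrow> nat set set \<Rightarrow> bool" where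
  "refines P Q \<longleftrightarrow> (\<forall>V\<in>P. \<exists>W\<in>Q. V \<subseteq> W)"

definition one_part :: "nat \<Rightarrow> nat set set" where
  "one_part n = {{0..<n}}"

definition mobius :: "'p set \<Rightarrow> ('p \<Rightarrow> 'p \<Rightarrow> bool) \<Rightarrow> 'p \<Rightarrow> 'p \<Rightarrow> int" where
  "mobius P le = (THE \<mu>.
      (\<forall>x\<in>P. \<forall>y\<in>P. if le x y
           then (\<Sum>z\<in>{z\<in>P. le x z \<and> le z y}. \<mu> x z) = (if x = y then 1 else 0)
           else \<mu> x y = 0) \<and>
      (\<forall>x y. x \<notin> P \<or> y \<notin> P \<longrightarrow> \<mu> x y = 0))"

definition blockprod :: "(nat \<Rightarrow> nat \<Rightarrow> 'a::cplx_algebra_1) \<Rightarrow> nat set \<Rightarrow> nat \<Rightarrow> 'a" where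
  "blockprod y V = (\<lambda>m. prod_list (map (\<lambda>l. y l m) (sorted_list_of_set V)))"

definition cumulant :: "nat \<Rightarrow> (nat \<Rightarrow> 'a::cplx_algebra_1 \<Rightarrow> complex) \<Rightarrow> nat
     \<Rightarrow> (nat \<Rightarrow> nat \<Rightarrow> 'a) \<Rightarrow> nat \<Rightarrow> complex" where
  "cumulant N \<phi> n y = (\<lambda>m. \<Sum>\<pi>\<in>NC n.
      (\<Prod>V\<in>\<pi>. condE N \<phi> (blockprod y V) m) * of_int (mobius (NC n) refines \<pi> (one_part n)))"

inductive_set gen_alg :: "nat \<Rightarrow> (nat \<Rightarrow> 'a::cplx_algebra_1) set \<Rightarrow> (nat \<Rightarrow> 'a) set"
  for N :: nat and S :: "(nat \<Rightarrow> 'a) set" where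
  base: "x \<in> S \<Longrightarrow> x \<in> gen_alg N S"
| scal: "dn N \<alpha> \<in> gen_alg N S"
| add: "x \<in> gen_alg N S \<Longrightarrow> y \<in> gen_alg N S \<Longrightarrow> (\<lambda>m. x m + y m) \<in> gen_alg N S"
| mult: "x \<in> gen_alg N S \<Longrightarrow> y \<in> gen_alg N S \<Longrightarrow> (\<lambda>m. x m * y m) \<in> gen_alg N S"

definition free_algs :: "nat \<Rightarrow> (nat \<Rightarrow> 'a::cplx_algebra_1 \<Rightarrow> complex) \<Rightarrow> 'i set
     \<Rightarrow> ('i \<Rightarrow> (nat \<Rightarrow> 'a) set) \<Rightarrow> bool" where
  "free_algs N \<phi> I B \<longleftrightarrow>
     (\<forall>n c y. (\<forall>l<n. c l \<in> I \<and> y l \<in> B (c l)) \<and> (\<exists>l<n. \<exists>l'<n. c l \<noteq> c l')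
        \<longrightarrow> cumulant N \<phi> n y = (\<lambda>_. 0))"

definition free_elems :: "nat \<Rightarrow> (nat \<Rightarrow> 'a::cplx_algebra_1 \<Rightarrow> complex) \<Rightarrow> 'i set
     \<Rightarrow> ('i \<Rightarrow> nat \<Rightarrow> 'a) \<Rightarrow> bool" where
  "free_elems N \<phi> I x \<longleftrightarrow> free_algs N \<phi> I (\<lambda>k. gen_alg N {x k})"

end

theory Submission
  imports Defs
begin

text \<open>In every coordinate \<open>m < N\<close> at least one of \<open>e\<^sub>i\<close>, \<open>e\<^sub>j\<close> is a scalar, and then so is
  every element of the algebra it generates together with \<open>D\<^sub>N\<close>. A mixed \<open>D\<^sub>N\<close>-valued cumulant is
  therefore, coordinatewise, a scalar free cumulant with a scalar entry at some position \<open>l\<close>, and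
  these vanish: the moment functional does not change when \<open>l\<close> is split off as a singleton block,
  while by Moebius inversion \<open>\<mu>(-, 1\<^sub>n)\<close> sums to zero over every fibre of this splitting map on
  \<open>NC(n)\<close>. In coordinates \<open>m \<ge> N\<close> the expectation is zero anyway.\<close>

section \<open>Moebius functions of finite posets\<close>

definition finite_poset :: "'p set \<Rightarrow> ('p \<Rightarrow> 'p \<Rightarrow> bool) \<Rightarrow> bool" where
  "finite_poset P le \<longleftrightarrow> finite P \<and> (\<forall>x\<in>P. le x x) \<and>
     (\<forall>x\<in>P. \<forall>y\<in>P. \<forall>z\<in>P. le x y \<longrightarrow> le y z \<longrightarrow> le x z) \<and>
     (\<forall>x\<in>P. \<forall>y\<in>P. le x y \<longrightarrow> le y x \<longrightarrow> x = y)"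

definition is_mobius :: "'p set \<Rightarrow> ('p \<Rightarrow> 'p \<Rightarrow> bool) \<Rightarrow> ('p \<Rightarrow> 'p \<Rightarrow> int) \<Rightarrow> bool" where
  "is_mobius P le \<mu> \<longleftrightarrow>
      (\<forall>x\<in>P. \<forall>y\<in>P. if le x y
           then (\<Sum>z\<in>{z\<in>P. le x z \<and> le z y}. \<mu> x z) = (if x = y then 1 else 0)
           else \<mu> x y = 0) \<and>
      (\<forall>x y. x \<notin> P \<or> y \<notin> P \<longrightarrow> \<mu> x y = 0)"

lemma finite_posetD:
  assumes "finite_poset P le"
  shows "finite P" "\<And>x. x \<in> P \<Longrightarrow> le x x"
    "\<And>x y z. x \<in> P \<Longrightarrow> y \<in> P \<Longrightarrow> z \<in> P \<Longrightarrow> le x y \<Longrightarrow> le y z \<Longrightarrow> le x z"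
    "\<And>x y. x \<in> P \<Longrightarrow> y \<in> P \<Longrightarrow> le x y \<Longrightarrow> le y x \<Longrightarrow> x = y"
  using assms unfolding finite_poset_def by blast+

lemma finite_poset_subset: "finite_poset P le \<Longrightarrow> Q \<subseteq> P \<Longrightarrow> finite_poset Q le"
  unfolding finite_poset_def by (meson finite_subset subsetD)

lemma finite_poset_dual: "finite_poset P le \<Longrightarrow> finite_poset P (\<lambda>x y. le y x)"
  unfolding finite_poset_def by blast

lemma finite_poset_induct [consumes 2, case_names less]:
  assumes po: "finite_poset P le" and "x \<in> P"
    and step: "\<And>x. x \<in> P \<Longrightarrow> (\<And>z. z \<in> P \<Longrightarrow> le z x \<Longrightarrow> z \<noteq> x \<Longrightarrow> Q z) \<Longrightarrow> Q x"
  shows "Q x"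
  using \<open>x \<in> P\<close>
proof (induction "card {w\<in>P. le w x}" arbitrary: x rule: less_induct)
  case less
  show ?case
  proof (rule step[OF less.prems])
    fix z assume z: "z \<in> P" "le z x" "z \<noteq> x"
    have "{w\<in>P. le w z} \<subset> {w\<in>P. le w x}"
      using finite_posetD(2-4)[OF po] z less.prems by blast
    then have "card {w\<in>P. le w z} < card {w\<in>P. le w x}"
      using finite_posetD(1)[OF po] by (simp add: psubset_card_mono)
    then show "Q z" using less.hyps z(1) by blast
  qed
qed

lemma finite_poset_induct_dual [consumes 2, case_names greater]:
  assumes "finite_poset P le" and "x \<in> P"
    and "\<And>x. x \<in> P \<Longrightarrow> (\<And>z. z \<in> P \<Longrightarrow> le x z \<Longrightarrow> z \<noteq> x \<Longrightarrow> Q z) \<Longrightarrow> Q x"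
  shows "Q x"
  using finite_poset_induct[OF finite_poset_dual[OF assms(1)] assms(2)] assms(3) by blast

lemma sum_interval_remove_top:
  assumes po: "finite_poset P le" and "y \<in> P" "le x y"
  shows "(\<Sum>z\<in>{z\<in>P. le x z \<and> le z y}. g z) = g y + (\<Sum>z\<in>{z\<in>P. le x z \<and> le z y \<and> z \<noteq> y}. g z)"
proof -
  have "{z\<in>P. le x z \<and> le z y} = insert y {z\<in>P. le x z \<and> le z y \<and> z \<noteq> y}"
    using assms finite_posetD(2)[OF po] by blast
  then show ?thesis using finite_posetD(1)[OF po] by simp
qed

lemma is_mobiusD:
  assumes "is_mobius P le m" "x \<in> P" "y \<in> P" "le x y"
  shows "(\<Sum>z\<in>{z\<in>P. le x z \<and> le z y}. m x z) = (if x = y then 1 else 0)"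
  using assms unfolding is_mobius_def by metis

lemma is_mobius_rec:
  assumes po: "finite_poset P le" and m: "is_mobius P le m"
    and "x \<in> P" "y \<in> P" "le x y"
  shows "m x y = (if x = y then 1 else 0) - (\<Sum>z\<in>{z\<in>P. le x z \<and> le z y \<and> z \<noteq> y}. m x z)"
  using is_mobiusD[OF m assms(3-5)] sum_interval_remove_top[OF po assms(4,5), of "m x"] by simp

lemma is_mobius_unique:
  assumes po: "finite_poset P le" and m1: "is_mobius P le m1" and m2: "is_mobius P le m2"
  shows "m1 = m2"
proof (intro ext)
  fix x y
  show "m1 x y = m2 x y"
  proof (cases "x \<in> P \<and> y \<in> P \<and> le x y")
    case False
    then show ?thesis using m1 m2 unfolding is_mobius_def by metis
  next
    case True
    then have "y \<in> P" by blast
    from po this True show ?thesis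
    proof (induction y rule: finite_poset_induct)
      case (less y)
      then have "(\<Sum>z\<in>{z\<in>P. le x z \<and> le z y \<and> z \<noteq> y}. m1 x z)
          = (\<Sum>z\<in>{z\<in>P. le x z \<and> le z y \<and> z \<noteq> y}. m2 x z)"
        by (intro sum.cong) auto
      then show ?case
        using is_mobius_rec[OF po m1, of x y] is_mobius_rec[OF po m2, of x y] less.prems by linarith
    qed
  qed
qed

text \<open>The side condition on cardinalities always holds in a finite poset; it only
  makes the recursion terminate.\<close>
function mobius_rec :: "'p set \<Rightarrow> ('p \<Rightarrow> 'p \<Rightarrow> bool) \<Rightarrow> 'p \<Rightarrow> 'p \<Rightarrow> int" where
  "mobius_rec P le x y =
     (if x \<in> P \<and> y \<in> P \<and> le x y then
        if x = y then 1
        else - (\<Sum>z\<in>{z\<in>P. le x z \<and> le z y \<and> z \<noteq> y \<and>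
                   card {w\<in>P. le x w \<and> le w z} < card {w\<in>P. le x w \<and> le w y}}.
                 mobius_rec P le x z)
      else 0)"
  by pat_completeness auto
termination
  by (relation "measure (\<lambda>(P, le, x, y). card {w\<in>P. le x w \<and> le w y})") auto

declare mobius_rec.simps [simp del]

lemma card_interval_less:
  assumes po: "finite_poset P le" and "x \<in> P" "y \<in> P" "z \<in> P" "le x z" "le z y" "z \<noteq> y"
  shows "card {w\<in>P. le x w \<and> le w z} < card {w\<in>P. le x w \<and> le w y}"
proof (rule psubset_card_mono)
  show "finite {w\<in>P. le x w \<and> le w y}" using finite_posetD(1)[OF po] by simp
  show "{w\<in>P. le x w \<and> le w z} \<subset> {w\<in>P. le x w \<and> le w y}"
    using finite_posetD(2-4)[OF po] assms(2-7) by blast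
qed

lemma is_mobius_mobius_rec:
  assumes po: "finite_poset P le"
  shows "is_mobius P le (mobius_rec P le)"
  unfolding is_mobius_def
proof (intro conjI ballI allI impI)
  fix x y assume "x \<notin> P \<or> y \<notin> P"
  then show "mobius_rec P le x y = 0" by (auto simp: mobius_rec.simps)
next
  fix x y assume x: "x \<in> P" and y: "y \<in> P"
  show "if le x y
        then (\<Sum>z\<in>{z\<in>P. le x z \<and> le z y}. mobius_rec P le x z) = (if x = y then 1 else 0)
        else mobius_rec P le x y = 0"
  proof (cases "le x y")
    case le: True
    have "mobius_rec P le x y = (if x = y then 1 else 0)
        - (\<Sum>z\<in>{z\<in>P. le x z \<and> le z y \<and> z \<noteq> y}. mobius_rec P le x z)"
    proof (cases "x = y")
      case True
      have empty: "{z\<in>P. le x z \<and> le z y \<and> z \<noteq> y} = {}"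
        using finite_posetD(4)[OF po] True y by blast
      have "mobius_rec P le x y = 1" using True y le by (subst mobius_rec.simps) simp
      then show ?thesis unfolding empty using True by simp
    qed (use card_interval_less[OF po x y] x y le in \<open>subst mobius_rec.simps, auto intro!: sum.cong\<close>)
    then have "(\<Sum>z\<in>{z\<in>P. le x z \<and> le z y}. mobius_rec P le x z) = (if x = y then 1 else 0)"
      using sum_interval_remove_top[OF po y le, of "mobius_rec P le x"] by linarith
    with le show ?thesis by simp
  qed (simp add: mobius_rec.simps)
qed

lemma is_mobius_mobius:
  assumes po: "finite_poset P le"
  shows "is_mobius P le (mobius P le)"
proof -
  have "\<exists>!m. is_mobius P le m"
    using is_mobius_mobius_rec[OF po] is_mobius_unique[OF po] by blast
  then show ?thesis
    unfolding mobius_def is_mobius_def[symmetric] by (rule theI')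
qed

lemma is_mobius_diag:
  assumes po: "finite_poset P le" and m: "is_mobius P le m" and "x \<in> P"
  shows "m x x = 1"
proof -
  have "(\<Sum>z\<in>{z\<in>P. le x z \<and> le z x}. m x z) = 1"
    using is_mobiusD[OF m \<open>x \<in> P\<close> \<open>x \<in> P\<close> finite_posetD(2)[OF po \<open>x \<in> P\<close>]] by simp
  also have "{z\<in>P. le x z \<and> le z x} = {x}"
    using finite_posetD(2,4)[OF po] \<open>x \<in> P\<close> by blast
  finally show ?thesis by simp
qed

lemma is_mobius_convolution:
  assumes po: "finite_poset P le" and m: "is_mobius P le m"
    and a: "a \<in> P" "le a y" and y: "y \<in> P"
  shows "(\<Sum>z\<in>{z\<in>P. le a z \<and> le z y}. m a z * (\<Sum>w\<in>{w\<in>P. le z w \<and> le w y}. m w y)) = m a y"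
proof -
  note fin = finite_posetD(1)[OF po] and trans = finite_posetD(3)[OF po]
  define I where "I a b = {z\<in>P. le a z \<and> le z b}" for a b
  have up: "I z y = {w\<in>I a y. le z w}" if "z \<in> I a y" for z
    using a y that unfolding I_def by (blast intro: trans)
  have down: "I a w = {z\<in>I a y. le z w}" if "w \<in> I a y" for w
    using a y that unfolding I_def by (blast intro: trans)
  have "(\<Sum>z\<in>I a y. m a z * (\<Sum>w\<in>I z y. m w y))
      = (\<Sum>z\<in>I a y. \<Sum>w\<in>{w\<in>I a y. le z w}. m a z * m w y)"
    by (intro sum.cong) (simp_all add: up sum_distrib_left)
  also have "\<dots> = (\<Sum>w\<in>I a y. \<Sum>z\<in>{z\<in>I a y. le z w}. m a z * m w y)"
    using fin unfolding I_def by (intro sum.swap_restrict) auto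
  also have "\<dots> = (\<Sum>w\<in>I a y. m w y * (\<Sum>z\<in>I a w. m a z))"
    by (intro sum.cong) (simp_all add: down sum_distrib_left mult.commute)
  also have "\<dots> = (\<Sum>w\<in>I a y. if w = a then m a y else 0)"
    using is_mobiusD[OF m] a unfolding I_def by (intro sum.cong) auto
  also have "\<dots> = m a y"
    using fin a finite_posetD(2)[OF po] unfolding I_def by (simp add: sum.delta')
  finally show ?thesis unfolding I_def .
qed

text \<open>The defining identity sums over the second argument; its dual below holds because a
  one-sided inverse in the incidence algebra of a finite poset is two-sided.\<close>
lemma is_mobius_sum_first:
  assumes po: "finite_poset P le" and m: "is_mobius P le m"
    and x: "x \<in> P" and y: "y \<in> P" and "le x y"
  shows "(\<Sum>z\<in>{z\<in>P. le x z \<and> le z y}. m z y) = (if x = y then 1 else 0)"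
proof -
  note fin = finite_posetD(1)[OF po]
  define I where "I a = {z\<in>P. le a z \<and> le z y}" for a
  define H where "H z = (\<Sum>w\<in>I z. m w y) - (if z = y then 1 else 0)" for z
  have inverse: "(\<Sum>z\<in>I a. m a z * H z) = 0" if a: "a \<in> P" "le a y" for a
  proof -
    have "(\<Sum>z\<in>I a. m a z * (if z = y then 1 else 0)) = (\<Sum>z\<in>I a. if z = y then m a y else 0)"
      by (intro sum.cong) auto
    also have "\<dots> = m a y"
      using fin a y finite_posetD(2)[OF po] unfolding I_def by (simp add: sum.delta')
    finally show ?thesis
      using is_mobius_convolution[OF po m a y]
      unfolding H_def I_def by (simp add: right_diff_distrib sum_subtractf)
  qed
  have "H a = 0" if "a \<in> P" "le a y" for a
    using po that
  proof (induction a rule: finite_poset_induct_dual)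
    case (greater a)
    have "a \<in> I a" "finite (I a)"
      using \<open>a \<in> P\<close> \<open>le a y\<close> finite_posetD(2)[OF po] fin unfolding I_def by auto
    moreover have "(\<Sum>z\<in>I a - {a}. m a z * H z) = 0"
      using greater.IH unfolding I_def by (intro sum.neutral) auto
    ultimately have "m a a * H a = 0"
      using inverse[OF \<open>a \<in> P\<close> \<open>le a y\<close>] by (simp add: sum.remove)
    then show ?case using is_mobius_diag[OF po m \<open>a \<in> P\<close>] by simp
  qed
  then show ?thesis using x \<open>le x y\<close> unfolding H_def I_def by simp
qed

text \<open>Summing the fibre sums over the image points above \<open>\<sigma>\<close> gives \<open>\<Sum>p \<ge> \<sigma>. \<mu>(p, y)\<close>, which
  vanishes as \<open>\<sigma> \<noteq> y\<close>; downward induction on \<open>\<sigma>\<close> within the image then kills every fibre sum.\<close>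
lemma sum_mobius_top_fibre_eq_0:
  assumes po: "finite_poset P le" and y: "y \<in> P" "\<And>p. p \<in> P \<Longrightarrow> le p y"
    and s: "\<And>p. p \<in> P \<Longrightarrow> s p \<in> P" "\<And>p. p \<in> P \<Longrightarrow> s p \<noteq> y"
    and le_s: "\<And>p q. p \<in> P \<Longrightarrow> q \<in> P \<Longrightarrow> le (s p) (s q) \<longleftrightarrow> le (s p) q"
    and "\<sigma> \<in> s ` P"
  shows "(\<Sum>p\<in>{p\<in>P. s p = \<sigma>}. mobius P le p y) = 0"
proof -
  note fin = finite_posetD(1)[OF po] and m = is_mobius_mobius[OF po]
  define K where "K = s ` P"
  have K: "K \<subseteq> P" "finite K" using s fin unfolding K_def by auto
  define g where "g \<sigma> = (\<Sum>p\<in>{p\<in>P. s p = \<sigma>}. mobius P le p y)" for \<sigma>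
  have upper_sum: "(\<Sum>\<tau>\<in>{\<tau>\<in>K. le \<sigma> \<tau>}. g \<tau>) = 0" if "\<sigma> \<in> K" for \<sigma>
  proof -
    obtain q where q: "q \<in> P" "\<sigma> = s q" using \<open>\<sigma> \<in> K\<close> unfolding K_def by blast
    have "(\<Sum>\<tau>\<in>{\<tau>\<in>K. le \<sigma> \<tau>}. g \<tau>)
        = (\<Sum>\<tau>\<in>{\<tau>\<in>K. le \<sigma> \<tau>}. \<Sum>p\<in>{p\<in>{p\<in>P. le \<sigma> (s p)}. s p = \<tau>}. mobius P le p y)"
      unfolding g_def by (rule sum.cong[OF refl], rule sum.cong) auto
    also have "\<dots> = (\<Sum>p\<in>{p\<in>P. le \<sigma> (s p)}. mobius P le p y)"
      using fin K by (intro sum.group) (auto simp: K_def)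
    also have "{p\<in>P. le \<sigma> (s p)} = {p\<in>P. le \<sigma> p \<and> le p y}"
      using le_s q y(2) by auto
    also have "(\<Sum>p\<in>{p\<in>P. le \<sigma> p \<and> le p y}. mobius P le p y) = 0"
      using is_mobius_sum_first[OF po m s(1)[OF q(1)] y(1) y(2)[OF s(1)[OF q(1)]]] s(2)[OF q(1)] q
      by simp
    finally show ?thesis .
  qed
  have "g \<sigma> = 0" if "\<sigma> \<in> K" for \<sigma>
    using finite_poset_subset[OF po K(1)] that
  proof (induction \<sigma> rule: finite_poset_induct_dual)
    case (greater \<sigma>)
    have "\<sigma> \<in> {\<tau>\<in>K. le \<sigma> \<tau>}"
      using greater.hyps finite_posetD(2)[OF po] K(1) by auto
    moreover have "(\<Sum>\<tau>\<in>{\<tau>\<in>K. le \<sigma> \<tau>} - {\<sigma>}. g \<tau>) = 0"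
      using greater.IH by (intro sum.neutral) auto
    ultimately show ?case
      using upper_sum[OF greater.hyps] K(2) by (simp add: sum.remove)
  qed
  then show ?thesis using \<open>\<sigma> \<in> s ` P\<close> unfolding g_def K_def by blast
qed

lemma sum_mobius_top_eq_0:
  fixes f :: "'p \<Rightarrow> 'b::comm_ring_1"
  assumes po: "finite_poset P le" and y: "y \<in> P" "\<And>p. p \<in> P \<Longrightarrow> le p y"
    and s: "\<And>p. p \<in> P \<Longrightarrow> s p \<in> P" "\<And>p. p \<in> P \<Longrightarrow> s p \<noteq> y"
    and le_s: "\<And>p q. p \<in> P \<Longrightarrow> q \<in> P \<Longrightarrow> le (s p) (s q) \<longleftrightarrow> le (s p) q"
    and f: "\<And>p. p \<in> P \<Longrightarrow> f (s p) = f p"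
  shows "(\<Sum>p\<in>P. f p * of_int (mobius P le p y)) = 0"
proof -
  note fin = finite_posetD(1)[OF po]
  have "(\<Sum>p\<in>P. f p * of_int (mobius P le p y)) = (\<Sum>p\<in>P. f (s p) * of_int (mobius P le p y))"
    using f by simp
  also have "\<dots> = (\<Sum>\<sigma>\<in>s ` P. \<Sum>p\<in>{p\<in>P. s p = \<sigma>}. f (s p) * of_int (mobius P le p y))"
    using fin by (intro sum.group[symmetric]) auto
  also have "\<dots> = (\<Sum>\<sigma>\<in>s ` P. f \<sigma> * of_int (\<Sum>p\<in>{p\<in>P. s p = \<sigma>}. mobius P le p y))"
    by (intro sum.cong) (simp_all add: sum_distrib_left)
  also have "\<dots> = 0"
    using sum_mobius_top_fibre_eq_0[OF po y s le_s] by simp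
  finally show ?thesis .
qed

section \<open>Noncrossing partitions with an isolated point\<close>

lemma finite_NC: "finite (NC n)"
proof (rule finite_subset)
  show "NC n \<subseteq> Pow (Pow {0..<n})" unfolding NC_def is_partition_def by auto
qed auto

lemma finite_partition: "is_partition p S \<Longrightarrow> finite S \<Longrightarrow> finite p"
  unfolding is_partition_def by (metis finite_UnionD)

lemma finite_poset_NC: "finite_poset (NC n) refines"
  unfolding finite_poset_def
proof (intro conjI ballI impI)
  fix p q assume "p \<in> NC n" "q \<in> NC n" and pq: "refines p q" "refines q p"
  have "p \<subseteq> q" if part: "is_partition p {0..<n}" and "refines p q" "refines q p" for p q
  proof
    fix V assume V: "V \<in> p"
    then obtain W V' where W: "W \<in> q" "V \<subseteq> W" and V': "V' \<in> p" "W \<subseteq> V'"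
      using \<open>refines p q\<close> \<open>refines q p\<close> unfolding refines_def by blast
    have "V \<noteq> {}" using part V unfolding is_partition_def by blast
    then have "V \<inter> V' \<noteq> {}" using W V' by blast
    then have "V = V'" using part V V'(1) unfolding is_partition_def by blast
    then show "V \<in> q" using W V' by auto
  qed
  then show "p = q" using \<open>p \<in> NC n\<close> \<open>q \<in> NC n\<close> pq unfolding NC_def by (simp add: subset_antisym)
qed (auto simp: finite_NC refines_def, meson order_trans)

lemma one_part_NC: "1 \<le> n \<Longrightarrow> one_part n \<in> NC n"
  unfolding NC_def one_part_def is_partition_def noncrossing_def by simp

lemma refines_one_part: "p \<in> NC n \<Longrightarrow> refines p (one_part n)"
  unfolding NC_def one_part_def is_partition_def refines_def by auto

definition isolate :: "nat \<Rightarrow> nat set set \<Rightarrow> nat set set" where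
  "isolate l p = insert {l} ((\<lambda>V. V - {l}) ` p - {{}})"

lemma isolate_blocks: "V \<in> isolate l p \<Longrightarrow> V = {l} \<or> (\<exists>W\<in>p. V = W - {l} \<and> V \<noteq> {})"
  unfolding isolate_def by auto

lemma is_partition_isolate:
  assumes p: "is_partition p S" and "l \<in> S"
  shows "is_partition (isolate l p) S"
  unfolding is_partition_def
proof (intro conjI ballI impI)
  fix V assume "V \<in> isolate l p"
  then show "V \<noteq> {}" "V \<subseteq> S"
    using isolate_blocks[of V l p] p \<open>l \<in> S\<close> unfolding is_partition_def by auto
next
  fix V W assume V: "V \<in> isolate l p" and W: "W \<in> isolate l p" and "V \<noteq> W"
  show "V \<inter> W = {}"
  proof (cases "V = {l} \<or> W = {l}")
    case True
    then show ?thesis using isolate_blocks[OF V] isolate_blocks[OF W] \<open>V \<noteq> W\<close> by auto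
  next
    case False
    then obtain V' W' where "V' \<in> p" "V = V' - {l}" "W' \<in> p" "W = W' - {l}"
      using isolate_blocks[OF V] isolate_blocks[OF W] by blast
    then show ?thesis using p \<open>V \<noteq> W\<close> unfolding is_partition_def by auto
  qed
next
  have "S \<subseteq> \<Union> (isolate l p)"
  proof
    fix x assume "x \<in> S"
    then obtain W where "W \<in> p" "x \<in> W" using p unfolding is_partition_def by blast
    show "x \<in> \<Union> (isolate l p)"
    proof (cases "x = l")
      case False
      then have "W - {l} \<in> isolate l p" using \<open>W \<in> p\<close> \<open>x \<in> W\<close> unfolding isolate_def by blast
      then show ?thesis using False \<open>x \<in> W\<close> by blast
    qed (simp add: isolate_def)
  qed
  moreover have "\<Union> (isolate l p) \<subseteq> S"
    using isolate_blocks[of _ l p] p \<open>l \<in> S\<close> unfolding is_partition_def by fastforce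
  ultimately show "\<Union> (isolate l p) = S" by blast
qed

lemma noncrossing_isolate:
  assumes "noncrossing p"
  shows "noncrossing (isolate l p)"
  unfolding noncrossing_def
proof (intro ballI impI notI)
  fix V W assume V: "V \<in> isolate l p" and W: "W \<in> isolate l p" and "V \<noteq> W"
    and "\<exists>a b c d. a < b \<and> b < c \<and> c < d \<and> a \<in> V \<and> c \<in> V \<and> b \<in> W \<and> d \<in> W"
  then obtain a b c d where abcd: "a < b" "b < c" "c < d" "a \<in> V" "c \<in> V" "b \<in> W" "d \<in> W"
    by blast
  then have "V \<noteq> {l}" "W \<noteq> {l}" by auto
  then obtain V' W' where "V' \<in> p" "V = V' - {l}" "W' \<in> p" "W = W' - {l}"
    using isolate_blocks[OF V] isolate_blocks[OF W] by blast
  moreover from this abcd have "a \<in> V'" "c \<in> V'" "b \<in> W'" "d \<in> W'" "V' \<noteq> W'"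
    using \<open>V \<noteq> W\<close> by auto
  ultimately show False
    using assms abcd(1-3) unfolding noncrossing_def by metis
qed

lemma isolate_NC: "p \<in> NC n \<Longrightarrow> l < n \<Longrightarrow> isolate l p \<in> NC n"
  unfolding NC_def by (simp add: is_partition_isolate noncrossing_isolate)

lemma isolate_neq_one_part: "2 \<le> n \<Longrightarrow> isolate l p \<noteq> one_part n"
proof
  assume "2 \<le> n" "isolate l p = one_part n"
  then have "{l} = {0..<n}" unfolding isolate_def one_part_def by (metis insertI1 singletonD)
  then have "0 \<in> {l}" "1 \<in> {l}" using \<open>2 \<le> n\<close> by auto
  then show False by simp
qed

lemma refines_isolate:
  assumes "l \<in> \<Union>p"
  shows "refines (isolate l p) p"
  unfolding refines_def
proof
  fix V assume "V \<in> isolate l p"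
  then show "\<exists>W\<in>p. V \<subseteq> W" using isolate_blocks[of V l p] assms by blast
qed

lemma refines_isolate_iff:
  assumes "l \<in> \<Union>p" and \<sigma>: "\<And>V. V \<in> \<sigma> \<Longrightarrow> V = {l} \<or> l \<notin> V"
  shows "refines \<sigma> (isolate l p) \<longleftrightarrow> refines \<sigma> p"
proof
  assume "refines \<sigma> (isolate l p)"
  then show "refines \<sigma> p"
    using refines_isolate[OF assms(1)] unfolding refines_def by (meson order_trans)
next
  assume "refines \<sigma> p"
  show "refines \<sigma> (isolate l p)"
    unfolding refines_def
  proof
    fix V assume "V \<in> \<sigma>"
    then obtain W where "W \<in> p" "V \<subseteq> W" using \<open>refines \<sigma> p\<close> unfolding refines_def by blast
    show "\<exists>W\<in>isolate l p. V \<subseteq> W"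
    proof (cases "W - {l} = {}")
      case True
      then have "V \<subseteq> {l}" using \<open>V \<subseteq> W\<close> by blast
      then show ?thesis unfolding isolate_def by blast
    next
      case False
      then have "W - {l} \<in> isolate l p" using \<open>W \<in> p\<close> unfolding isolate_def by blast
      moreover have "V \<subseteq> {l} \<or> V \<subseteq> W - {l}" using \<sigma>[OF \<open>V \<in> \<sigma>\<close>] \<open>V \<subseteq> W\<close> by blast
      ultimately show ?thesis unfolding isolate_def by blast
    qed
  qed
qed

section \<open>Cumulants with a scalar entry\<close>

lemma scaleC_zero_left: "scaleC 0 (x::'a::cplx_algebra_1) = 0"
proof -
  have "scaleC 0 x = scaleC 0 x + scaleC 0 x"
    using scaleC_add_left[of 0 0 x] by simp
  then show ?thesis by simp
qed

lemma scaleC_one_mult_scaleC_one: "scaleC c (1::'a::cplx_algebra_1) * scaleC d 1 = scaleC (c * d) 1"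
  by (simp add: mult_scaleC_left mult_scaleC_right scaleC_scaleC mult.commute)

lemma prod_list_map_scaleC_one_factor:
  fixes g :: "'b \<Rightarrow> 'a::cplx_algebra_1"
  assumes "distinct xs" "l \<in> set xs" "g l = scaleC c 1"
  shows "prod_list (map g xs) = scaleC c (prod_list (map g (remove1 l xs)))"
  using assms by (induction xs) (auto simp: mult_scaleC_left mult_scaleC_right)

lemma ncpsD:
  assumes "ncps A \<phi>"
  shows "1 \<in> A" "\<And>x y. x \<in> A \<Longrightarrow> y \<in> A \<Longrightarrow> x + y \<in> A"
    "\<And>x y. x \<in> A \<Longrightarrow> y \<in> A \<Longrightarrow> x * y \<in> A" "\<And>x. x \<in> A \<Longrightarrow> scaleC c x \<in> A"
    "\<And>x. x \<in> A \<Longrightarrow> \<phi> (scaleC c x) = c * \<phi> x" "\<phi> 1 = 1"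
  using assms unfolding ncps_def by blast+

lemma ncps_scaleC_one: "ncps A \<phi> \<Longrightarrow> scaleC c 1 \<in> A"
  by (simp add: ncpsD(1,4))

lemma ncps_prod_list: "ncps A \<phi> \<Longrightarrow> set xs \<subseteq> A \<Longrightarrow> prod_list xs \<in> A"
  by (induction xs) (auto simp: ncpsD(1,3))

lemma moment_blockprod_scalar_entry:
  assumes ncps: "ncps A \<psi>" and "finite V" "l \<in> V"
    and mem: "\<forall>k\<in>V. y k m \<in> A" and scalar: "y l m = scaleC c 1"
  shows "\<psi> (blockprod y V m) = c * \<psi> (blockprod y (V - {l}) m)"
proof -
  have "blockprod y V m = scaleC c (prod_list (map (\<lambda>k. y k m) (remove1 l (sorted_list_of_set V))))"
    unfolding blockprod_def using assms(2,3) scalar by (intro prod_list_map_scaleC_one_factor) auto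
  also have "remove1 l (sorted_list_of_set V) = sorted_list_of_set (V - {l})"
    using \<open>finite V\<close> by (simp add: sorted_list_of_set_remove)
  finally have "blockprod y V m = scaleC c (blockprod y (V - {l}) m)"
    unfolding blockprod_def .
  moreover have "blockprod y (V - {l}) m \<in> A"
    unfolding blockprod_def using \<open>finite V\<close> mem by (intro ncps_prod_list[OF ncps]) auto
  ultimately show ?thesis using ncpsD(5)[OF ncps] by simp
qed

lemma prod_isolate:
  fixes q :: "nat set \<Rightarrow> 'b::comm_monoid_mult"
  assumes p: "is_partition p S" "finite S" "l \<in> S"
    and q: "q {} = 1" "\<And>V. V \<subseteq> S \<Longrightarrow> l \<in> V \<Longrightarrow> q V = c * q (V - {l})"
  shows "(\<Prod>V\<in>isolate l p. q V) = (\<Prod>V\<in>p. q V)"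
proof -
  have fin: "finite p" using finite_partition[OF p(1,2)] .
  obtain V0 where V0: "V0 \<in> p" "l \<in> V0" using p unfolding is_partition_def by blast
  have blocks: "V \<subseteq> S" "V \<noteq> {}" if "V \<in> p" for V using p that unfolding is_partition_def by auto
  have disjoint: "V \<inter> W = {}" if "V \<in> p" "W \<in> p" "V \<noteq> W" for V W
    using p that unfolding is_partition_def by blast
  have "(\<Prod>V\<in>isolate l p. q V) = q {l} * (\<Prod>W\<in>(\<lambda>V. V - {l}) ` p - {{}}. q W)"
    unfolding isolate_def using fin by (subst prod.insert) auto
  also have "q {l} = c" using q \<open>l \<in> S\<close> by simp
  also have "(\<Prod>W\<in>(\<lambda>V. V - {l}) ` p - {{}}. q W) = (\<Prod>W\<in>(\<lambda>V. V - {l}) ` p. q W)"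
    using fin q(1) by (intro prod.mono_neutral_left) auto
  also have "\<dots> = (\<Prod>V\<in>p. q (V - {l}))"
  proof (subst prod.reindex_nontrivial[OF fin])
    fix V W assume "V \<in> p" "W \<in> p" "V \<noteq> W" "V - {l} = W - {l}"
    then have "V - {l} = {}" using disjoint by blast
    then show "q (V - {l}) = 1" using q(1) by (simp only:)
  qed simp
  also have "c * (\<Prod>V\<in>p. q (V - {l})) = c * q (V0 - {l}) * (\<Prod>V\<in>p - {V0}. q (V - {l}))"
    using fin V0 by (simp add: prod.remove mult.assoc)
  also have "(\<Prod>V\<in>p - {V0}. q (V - {l})) = (\<Prod>V\<in>p - {V0}. q V)"
  proof (intro prod.cong refl)
    fix V assume "V \<in> p - {V0}"
    then have "l \<notin> V" using disjoint V0 by blast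
    then show "q (V - {l}) = q V" by simp
  qed
  also have "c * q (V0 - {l}) = q V0"
    using q(2) blocks V0 by simp
  also have "q V0 * (\<Prod>V\<in>p - {V0}. q V) = (\<Prod>V\<in>p. q V)"
    using fin V0 by (simp add: prod.remove)
  finally show ?thesis .
qed

lemma cumulant_eq_0_if_scalar_entry:
  assumes ncps: "ncps Am (\<phi> m)" and "m < N" "2 \<le> n" "l < n"
    and mem: "\<forall>k<n. y k m \<in> Am" and scalar: "y l m = scaleC c 1"
  shows "cumulant N \<phi> n y m = 0"
proof -
  let ?moment = "\<lambda>\<pi>. \<Prod>V\<in>\<pi>. \<phi> m (blockprod y V m)"
  have partition: "is_partition \<pi> {0..<n}" if "\<pi> \<in> NC n" for \<pi>
    using that unfolding NC_def by simp
  have "?moment (isolate l \<pi>) = ?moment \<pi>" if "\<pi> \<in> NC n" for \<pi>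
  proof (rule prod_isolate[OF partition[OF that]])
    show "\<phi> m (blockprod y {} m) = 1" unfolding blockprod_def using ncpsD(6)[OF ncps] by simp
    show "\<phi> m (blockprod y V m) = c * \<phi> m (blockprod y (V - {l}) m)"
      if "V \<subseteq> {0..<n}" "l \<in> V" for V
      using that mem scalar finite_subset[OF that(1)]
      by (intro moment_blockprod_scalar_entry[OF ncps]) auto
  qed (use \<open>l < n\<close> in auto)
  moreover have "refines (isolate l \<pi>) (isolate l \<rho>) \<longleftrightarrow> refines (isolate l \<pi>) \<rho>"
    if "\<rho> \<in> NC n" for \<pi> \<rho>
    using partition[OF that] \<open>l < n\<close> isolate_blocks[of _ l \<pi>] unfolding is_partition_def
    by (intro refines_isolate_iff) auto
  moreover have "one_part n \<in> NC n" using one_part_NC \<open>2 \<le> n\<close> by simp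
  ultimately have "(\<Sum>\<pi>\<in>NC n. ?moment \<pi> * of_int (mobius (NC n) refines \<pi> (one_part n))) = 0"
    using isolate_NC \<open>l < n\<close> isolate_neq_one_part[OF \<open>2 \<le> n\<close>]
    by (intro sum_mobius_top_eq_0[OF finite_poset_NC _ refines_one_part, where s = "isolate l"]) auto
  then show ?thesis
    unfolding cumulant_def condE_def using \<open>m < N\<close> by simp
qed

lemma cumulant_eq_0_beyond:
  assumes "N \<le> m" "1 \<le> n"
  shows "cumulant N \<phi> n y m = 0"
proof -
  have "(\<Prod>V\<in>\<pi>. condE N \<phi> (blockprod y V) m) = 0" if "\<pi> \<in> NC n" for \<pi>
  proof -
    have partition: "is_partition \<pi> {0..<n}" using that unfolding NC_def by simp
    then have "0 \<in> \<Union>\<pi>" using \<open>1 \<le> n\<close> unfolding is_partition_def by simp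
    then obtain V where "V \<in> \<pi>" by blast
    then show ?thesis
      using finite_partition[OF partition] \<open>N \<le> m\<close> by (intro prod_zero) (auto simp: condE_def)
  qed
  then show ?thesis unfolding cumulant_def by simp
qed

lemma gen_alg_single_mem:
  assumes "\<forall>k<N. ncps (A k) (\<phi> k)" "a \<in> A i" "x \<in> gen_alg N {single i a}" "m < N"
  shows "x m \<in> A m"
  using assms(3)
proof induction
  case (base x)
  then show ?case
    using assms(1,2,4) ncps_scaleC_one[of "A m" "\<phi> m" 0]
    by (auto simp: single_def scaleC_zero_left)
next
  case (scal \<alpha>)
  show ?case using ncps_scaleC_one[OF assms(1)[rule_format, OF assms(4)]] assms(4) by (simp add: dn_def)
qed (use ncpsD(2,3)[OF assms(1)[rule_format, OF assms(4)]] in auto)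

lemma gen_alg_single_scalar:
  assumes "x \<in> gen_alg N {single i a}" "m \<noteq> i"
  shows "\<exists>c. x m = scaleC c 1"
  using assms(1)
proof induction
  case (base x)
  then have "x m = scaleC 0 1" using \<open>m \<noteq> i\<close> by (simp add: single_def scaleC_zero_left)
  then show ?case ..
next
  case (scal \<alpha>)
  have "dn N \<alpha> m = scaleC (if m < N then \<alpha> m else 0) 1"
    by (simp add: dn_def scaleC_zero_left)
  then show ?case ..
next
  case (add x y)
  then show ?case by (metis scaleC_add_left)
next
  case (mult x y)
  then show ?case by (metis scaleC_one_mult_scaleC_one)
qed

lemma cumulant_eq_0_if_mixed:
  assumes ncps: "\<forall>k<N. ncps (A k) (\<phi> k)" and "i \<noteq> j" "ai \<in> A i" "aj \<in> A j"
    and gen: "\<forall>l<n. y l \<in> gen_alg N {single i ai} \<or> y l \<in> gen_alg N {single j aj}"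
    and li: "li < n" "y li \<in> gen_alg N {single i ai}"
    and lj: "lj < n" "y lj \<in> gen_alg N {single j aj}" and "li \<noteq> lj"
  shows "cumulant N \<phi> n y m = 0"
proof (cases "m < N")
  case True
  have "\<forall>l<n. y l m \<in> A m"
    using gen gen_alg_single_mem[OF ncps \<open>ai \<in> A i\<close>] gen_alg_single_mem[OF ncps \<open>aj \<in> A j\<close>] True
    by blast
  moreover obtain l c where "l < n" "y l m = scaleC c 1"
  proof (cases "m = i")
    case True
    then show ?thesis using that gen_alg_single_scalar[OF lj(2)] lj(1) \<open>i \<noteq> j\<close> by blast
  next
    case False
    then show ?thesis using that gen_alg_single_scalar[OF li(2)] li(1) by blast
  qed
  moreover have "2 \<le> n" using li lj \<open>li \<noteq> lj\<close> by linarith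
  ultimately show ?thesis
    using cumulant_eq_0_if_scalar_entry[OF _ True] ncps True by blast
next
  case False
  then show ?thesis using li by (intro cumulant_eq_0_beyond) auto
qed

theorem mainTheorem4:
  fixes N :: nat and A :: "nat \<Rightarrow> 'a::cplx_algebra_1 set"
    and \<phi> :: "nat \<Rightarrow> 'a \<Rightarrow> complex" and i j :: nat and ai aj :: 'a
  assumes "\<forall>k<N. ncps (A k) (\<phi> k)"
    and "i < N" and "j < N" and "i \<noteq> j"
    and "ai \<in> A i" and "aj \<in> A j"
  shows "free_elems N \<phi> (UNIV :: bool set)
           (\<lambda>b. if b then single i ai else single j aj)"
  unfolding free_elems_def free_algs_def
proof (intro allI impI ext)
  fix n m :: nat and c :: "nat \<Rightarrow> bool" and y :: "nat \<Rightarrow> nat \<Rightarrow> 'a"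
  assume y: "(\<forall>l<n. c l \<in> UNIV \<and> y l \<in> gen_alg N {if c l then single i ai else single j aj})
    \<and> (\<exists>l<n. \<exists>l'<n. c l \<noteq> c l')"
  then obtain li lj where l: "li < n" "lj < n" "c li" "\<not> c lj" by blast
  have "y l \<in> gen_alg N {single i ai} \<or> y l \<in> gen_alg N {single j aj}" if "l < n" for l
    using y that by (cases "c l") auto
  then show "cumulant N \<phi> n y m = 0"
    using y l by (intro cumulant_eq_0_if_mixed[OF assms(1,4-6) _ l(1) _ l(2)]) auto
qed

end
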